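(* Under the standing assumptions in the context, for every $k\in[s]$ with $d(i_k)\le\delta^{1/32}C$ we have $d_H(k)\le 2\gamma\delta^{1/32}C$; moreover, with probability $1-o(M^{-2})$, $d_S(k)\le 2\gamma\delta^{1/32}C$ holds for every $k\in[s]$ with $d(i_k)\le\delta^{1/32}C$.
   Context: All asymptotics are as $n\to\infty$. For each $n$, $\mathbf d=(d(1),\dots,d(n))$ is a sequence of integers with $1\le d(1)\le\dots\le d(n)$ and even sum; $M=\sum_i d(i)$, $\Delta=d(n)$, $d(A)=\sum_{i\in A}d(i)$. $G$ is a uniformly random simple graph on $[n]$ with degree sequence $\mathbf d$. $S=\{i_1,\dots,i_s\}\subseteq[n]$ with $i_1<\dots<i_s$ is a given set, $\gamma=d(S)/M$. Standing assumptions: there is $\delta=\delta(n)\to0$ with $\delta^{-1}=O(\log\log M)$ and $\Delta^2(\gamma^{-1}\log M)^{12}\le\delta\,d(S)$, and a constant $c>0$ with $\gamma<1-c$. $C=\delta^{-1/16}\gamma^{-1}\log M$. $d_S(k)$ is the degree of $i_k$ in $G[S]$. For a sequence $\mathbf x$, $n_k(\mathbf x)$ is the number of entries equal to $k$. Definition of $\mathbf d_H$: with $Z_j\sim\mathrm{Bin}(j,\gamma)$, $N(k)=\lfloor\sum_{i\in S}\Pr(Z_{d(i)}\le k)+\tfrac12\rfloor$ for $k\ge0$, $N(-1)=0$; $\mathbf d_H=(d_H(1),d_H(2),\dots)$ is the non-decreasing sequence with $n_k(\mathbf d_H)=N(k)-N(k-1)$. *)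

theory Defs
  imports "HOL-Probability.Probability" "HOL-Library.Landau_Symbols"
begin

definition simple_graphs_on :: "nat \<Rightarrow> nat set set set" where
  "simple_graphs_on n = Pow {e. e \<subseteq> {1..n} \<and> card e = 2}"

definition gdeg :: "nat set set \<Rightarrow> nat \<Rightarrow> nat" where
  "gdeg E i = card {e\<in>E. i \<in> e}"

definition graphs_with_degrees :: "nat \<Rightarrow> (nat \<Rightarrow> nat) \<Rightarrow> nat set set set" where
  "graphs_with_degrees n d = {E \<in> simple_graphs_on n. \<forall>i\<in>{1..n}. gdeg E i = d i}"

definition induced_deg :: "nat set set \<Rightarrow> nat set \<Rightarrow> nat \<Rightarrow> nat" where
  "induced_deg E S i = card {e\<in>E. i \<in> e \<and> e \<subseteq> S}"

text \<open>k-th smallest element of S (k = 1..card S), i.e. i_k.\<close>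
definition elem_k :: "nat set \<Rightarrow> nat \<Rightarrow> nat" where
  "elem_k S k = sorted_list_of_set S ! (k - 1)"

definition Ncnt :: "real \<Rightarrow> (nat \<Rightarrow> nat) \<Rightarrow> nat set \<Rightarrow> nat \<Rightarrow> int" where
  "Ncnt \<gamma> d S k =
     \<lfloor>(\<Sum>i\<in>S. measure_pmf.prob (binomial_pmf (d i) \<gamma>) {..k}) + 1/2\<rfloor>"

definition nH :: "real \<Rightarrow> (nat \<Rightarrow> nat) \<Rightarrow> nat set \<Rightarrow> nat \<Rightarrow> nat" where
  "nH \<gamma> d S j = nat (Ncnt \<gamma> d S j - (if j = 0 then 0 else Ncnt \<gamma> d S (j - 1)))"

text \<open>The non-decreasing sequence d_H as a list: value j repeated n_j times.
  Values j > Delta do not occur (N(j) = s there), so listing j = 0..Delta suffices.\<close>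
definition dH_list :: "real \<Rightarrow> (nat \<Rightarrow> nat) \<Rightarrow> nat set \<Rightarrow> nat \<Rightarrow> nat list" where
  "dH_list \<gamma> d S \<Delta> = concat (map (\<lambda>j. replicate (nH \<gamma> d S j) j) [0..<\<Delta>+1])"

text \<open>d_H(k), 1-indexed.\<close>
definition dH :: "real \<Rightarrow> (nat \<Rightarrow> nat) \<Rightarrow> nat set \<Rightarrow> nat \<Rightarrow> nat \<Rightarrow> nat" where
  "dH \<gamma> d S \<Delta> k = dH_list \<gamma> d S \<Delta> ! (k - 1)"

end

(*
  Put L = delta^(-1/32) ln M = gamma delta^(1/32) C, r = floor(L/2) and m = floor(2L) + 1.  If a
  random variable X with values in the naturals has binomial moment E (X choose r) <= Lambda^r / r!
  with Lambda <= 9L/8, then Markov's inequality for (X choose r) gives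
  Pr(X >= m) <= Lambda^r / (r! (m choose r)) <= (3/4)^r <= 2 M^-6.

  For d_H this is applied to X ~ Bin(d(i), gamma), whose r-th binomial moment is
  (d(i) choose r) gamma^r: each of i_1, ..., i_k has degree at most d(i_k) <= delta^(1/32) C, hence
  Pr(X <= 2L) >= 1 - 2 M^-6, so N(2L) >= k and d_H(k) <= 2L.

  For d_S(k) = |N(i_k) \<inter> S| a switching argument (replace the edges va, xy by vx, ay) shows that a
  fixed star from v to a set A is present with probability at most
  prod_(a in A) d(v) d(a) / (M - 6 Delta^2).  Summing over the r-subsets A of S bounds the r-th
  binomial moment of |N(v) \<inter> S| by Lambda^r / r! with Lambda = d(v) d(S) / (M - 6 Delta^2) <= 9L/8,
  using 54 Delta^2 <= M.  A union bound over the at most M vertices gives 2 M^-5 = o(M^-2).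
*)
theory Submission
  imports Defs "HOL-Real_Asymp.Real_Asymp"
begin

lemma falling_power_le_fact_binomial:
  assumes "r \<le> m"
  shows "(real m - real r + 1) ^ r \<le> fact r * real (m choose r)"
proof -
  have "fact r * real (m choose r) = pochhammer (real m - real r + 1) r"
    by (simp add: binomial_gbinomial gbinomial_pochhammer')
  also have "\<dots> = (\<Prod>i<r. real m - real r + 1 + real i)"
    by (simp add: pochhammer_prod atLeast0LessThan)
  finally show ?thesis
    using prod_mono[of "{..<r}" "\<lambda>_. real m - real r + 1"] assms by simp
qed

lemma power_div_fact_binomial_le_three_quarters_power:
  fixes \<Lambda> L :: real
  assumes "0 \<le> \<Lambda>" "\<Lambda> \<le> 9/8 * L" "2 * L < real m" "real r \<le> L / 2"
  shows "\<Lambda> ^ r / (fact r * real (m choose r)) \<le> (3/4) ^ r"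
proof -
  have "r \<le> m" using assms by linarith
  have "\<Lambda> ^ r \<le> (3/4 * (real m - real r + 1)) ^ r"
    using assms by (intro power_mono) auto
  also have "\<dots> \<le> (3/4) ^ r * (fact r * real (m choose r))"
    unfolding power_mult_distrib using falling_power_le_fact_binomial[OF \<open>r \<le> m\<close>]
    by (intro mult_left_mono) auto
  finally show ?thesis
    using \<open>r \<le> m\<close> by (simp add: divide_le_eq zero_less_binomial)
qed

lemma binomial_moment_ratio_le_inverse_pow6:
  fixes \<Lambda> L \<mu> :: real
  defines "r \<equiv> nat \<lfloor>L / 2\<rfloor>" and "m \<equiv> Suc (nat \<lfloor>2 * L\<rfloor>)"
  assumes \<mu>: "1 \<le> \<mu>" "48 * ln \<mu> \<le> L" and \<Lambda>: "0 \<le> \<Lambda>" "\<Lambda> \<le> 9/8 * L"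
  shows "r \<le> m" "\<Lambda> ^ r / (fact r * real (m choose r)) \<le> 2 / \<mu> ^ 6"
proof -
  have "0 \<le> L" using \<mu> ln_ge_zero[of \<mu>] by linarith
  then have "2 * L < real m" "real r \<le> L / 2" "L / 2 - 1 \<le> real r"
    unfolding r_def m_def by linarith+
  then show "r \<le> m" by linarith
  have three_quarters: "3/4 \<le> exp (-1/4 :: real)"
    using exp_ge_add_one_self[of "-1/4 :: real"] by simp
  then have "exp (1/4 :: real) \<le> 2"
    by (simp add: exp_minus field_simps)
  have "\<Lambda> ^ r / (fact r * real (m choose r)) \<le> (3/4) ^ r"
    using \<Lambda> \<open>2 * L < real m\<close> \<open>real r \<le> L / 2\<close> by (intro power_div_fact_binomial_le_three_quarters_power)
  also have "\<dots> \<le> exp (-1/4) ^ r"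
    using three_quarters by (intro power_mono) auto
  also have "\<dots> = exp (- real r / 4)"
    by (simp flip: exp_of_nat_mult)
  also have "\<dots> \<le> exp (1/4) * exp (- 6 * ln \<mu>)"
    using \<mu> \<open>L / 2 - 1 \<le> real r\<close> by (simp flip: exp_add)
  also have "\<dots> = exp (1/4) / \<mu> ^ 6"
    using exp_of_nat_mult[of 6 "ln \<mu>"] \<mu> by (simp add: exp_minus field_simps)
  also have "\<dots> \<le> 2 / \<mu> ^ 6"
    using \<open>exp (1/4) \<le> 2\<close> \<mu> by (simp add: divide_right_mono)
  finally show "\<Lambda> ^ r / (fact r * real (m choose r)) \<le> 2 / \<mu> ^ 6" .
qed

lemma mult_two_inverse_pow6_le:
  fixes a \<mu> :: real
  assumes "0 \<le> a" "a \<le> \<mu>"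
  shows "a * (2 / \<mu> ^ 6) \<le> 2 / \<mu> ^ 5"
proof (cases "\<mu> = 0")
  case False
  have "a * (2 / \<mu> ^ 6) \<le> \<mu> * (2 / \<mu> ^ 6)"
    using assms by (intro mult_right_mono) auto
  also have "\<dots> = 2 / \<mu> ^ 5"
    using False by (simp add: field_simps eval_nat_numeral)
  finally show ?thesis .
qed (use assms in simp)

lemma markov_binomial_moment:
  fixes w :: "'a \<Rightarrow> real" and f :: "'a \<Rightarrow> nat"
  assumes "finite I" "\<And>i. i \<in> I \<Longrightarrow> 0 \<le> w i"
  shows "(\<Sum>i\<in>{i\<in>I. m \<le> f i}. w i) * real (m choose r) \<le> (\<Sum>i\<in>I. w i * real (f i choose r))"
proof -
  have "(\<Sum>i\<in>{i\<in>I. m \<le> f i}. w i) * real (m choose r)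
      \<le> (\<Sum>i\<in>{i\<in>I. m \<le> f i}. w i * real (f i choose r))"
    unfolding sum_distrib_right
    using assms by (intro sum_mono mult_left_mono) (auto intro: binomial_right_mono)
  also have "\<dots> \<le> (\<Sum>i\<in>I. w i * real (f i choose r))"
    using assms by (intro sum_mono2) auto
  finally show ?thesis .
qed

lemma subsets_card_Suc_insert:
  assumes "finite S" "x \<notin> S"
  shows "{A. A \<subseteq> insert x S \<and> card A = Suc k} =
         {A. A \<subseteq> S \<and> card A = Suc k} \<union> insert x ` {A. A \<subseteq> S \<and> card A = k}"
proof (intro equalityI subsetI)
  fix A assume A: "A \<in> {A. A \<subseteq> insert x S \<and> card A = Suc k}"
  then have "finite A" using assms(1) finite_subset by auto
  show "A \<in> {A. A \<subseteq> S \<and> card A = Suc k} \<union> insert x ` {A. A \<subseteq> S \<and> card A = k}"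
  proof (cases "x \<in> A")
    case True
    then have "A = insert x (A - {x})" "A - {x} \<in> {A. A \<subseteq> S \<and> card A = k}"
      using A \<open>finite A\<close> by auto
    then show ?thesis by blast
  qed (use A in auto)
next
  fix A assume "A \<in> {A. A \<subseteq> S \<and> card A = Suc k} \<union> insert x ` {A. A \<subseteq> S \<and> card A = k}"
  then show "A \<in> {A. A \<subseteq> insert x S \<and> card A = Suc k}"
    using assms by (auto simp: card_insert_if finite_subset)
qed

lemma sum_prod_subsets_card_Suc_insert:
  fixes w :: "'a \<Rightarrow> 'b :: comm_semiring_1"
  assumes "finite S" "x \<notin> S"
  shows "(\<Sum>A | A \<subseteq> insert x S \<and> card A = Suc k. \<Prod>a\<in>A. w a)
       = (\<Sum>A | A \<subseteq> S \<and> card A = Suc k. \<Prod>a\<in>A. w a) + w x * (\<Sum>A | A \<subseteq> S \<and> card A = k. \<Prod>a\<in>A. w a)"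
proof -
  have "inj_on (insert x) {A. A \<subseteq> S \<and> card A = k}"
    using assms by (intro inj_onI) (metis insert_ident mem_Collect_eq subset_iff)
  then have "(\<Sum>A | A \<subseteq> insert x S \<and> card A = Suc k. \<Prod>a\<in>A. w a)
      = (\<Sum>A | A \<subseteq> S \<and> card A = Suc k. \<Prod>a\<in>A. w a) + (\<Sum>A | A \<subseteq> S \<and> card A = k. \<Prod>a\<in>insert x A. w a)"
    unfolding subsets_card_Suc_insert[OF assms] using assms
    by (subst sum.union_disjoint) (auto simp: sum.reindex)
  moreover have "(\<Prod>a\<in>insert x A. w a) = w x * (\<Prod>a\<in>A. w a)" if "A \<subseteq> S" for A
    using that assms by (subst prod.insert) (auto dest: finite_subset)
  ultimately show ?thesis by (simp add: sum_distrib_left)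
qed

lemma power_Suc_add_linear_le_power_Suc:
  fixes p w :: real
  assumes "0 \<le> p" "0 \<le> w"
  shows "p ^ Suc k + real (Suc k) * w * p ^ k \<le> (p + w) ^ Suc k"
proof -
  have "(\<Sum>i\<in>{0, 1}. real (Suc k choose i) * w ^ i * p ^ (Suc k - i))
      \<le> (\<Sum>i\<le>Suc k. real (Suc k choose i) * w ^ i * p ^ (Suc k - i))"
    using assms by (intro sum_mono2) auto
  also have "\<dots> = (p + w) ^ Suc k"
    by (subst add.commute) (rule binomial_ring[symmetric])
  finally show ?thesis by (simp add: algebra_simps)
qed

lemma sum_prod_subsets_card_le:
  fixes w :: "'a \<Rightarrow> real"
  assumes "finite S" "\<And>x. x \<in> S \<Longrightarrow> 0 \<le> w x"
  shows "(\<Sum>A | A \<subseteq> S \<and> card A = r. \<Prod>a\<in>A. w a) \<le> (\<Sum>a\<in>S. w a) ^ r / fact r"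
  using assms
proof (induction S arbitrary: r rule: finite_induct)
  case empty
  have subsets: "{A. A \<subseteq> {} \<and> card A = r} = (if r = 0 then {{}} else {})" by auto
  show ?case unfolding subsets by simp
next
  case (insert x S)
  let ?e = "\<lambda>r. \<Sum>A | A \<subseteq> S \<and> card A = r. \<Prod>a\<in>A. w a"
  let ?p = "\<Sum>a\<in>S. w a"
  have "0 \<le> w x" "0 \<le> ?p" using insert.prems by (auto intro: sum_nonneg)
  have IH: "?e r \<le> ?p ^ r / fact r" for r using insert by auto
  show ?case
  proof (cases r)
    case 0
    have "{A. A \<subseteq> insert x S \<and> card A = 0} = {{}}"
      using insert.hyps by (auto dest: finite_subset[of _ "insert x S"])
    then show ?thesis using 0 by simp
  next
    case (Suc k)
    have "?e (Suc k) + w x * ?e k \<le> ?p ^ Suc k / fact (Suc k) + w x * (?p ^ k / fact k)"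
      by (intro add_mono mult_left_mono IH \<open>0 \<le> w x\<close>)
    also have "\<dots> = (?p ^ Suc k + real (Suc k) * w x * ?p ^ k) / fact (Suc k)"
      by (simp add: add_divide_distrib)
    also have "\<dots> \<le> (?p + w x) ^ Suc k / fact (Suc k)"
      using \<open>0 \<le> w x\<close> \<open>0 \<le> ?p\<close> by (intro divide_right_mono power_Suc_add_linear_le_power_Suc) auto
    finally show ?thesis
      using insert.hyps Suc by (simp add: sum_prod_subsets_card_Suc_insert add.commute)
  qed
qed

section \<open>Binomial tails and the sequence \<open>d\<^sub>H\<close>\<close>

lemma sum_choose_mult_pmf_binomial:
  fixes p :: real
  assumes "0 \<le> p" "p \<le> 1"
  shows "(\<Sum>j\<le>d. real (j choose r) * pmf (binomial_pmf d p) j) = real (d choose r) * p ^ r"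
proof (cases "r \<le> d")
  case False
  then show ?thesis by (simp add: binomial_eq_0)
next
  case True
  let ?q = "\<lambda>j. real (j choose r) * pmf (binomial_pmf d p) j"
  have "(\<Sum>j\<le>d. ?q j) = (\<Sum>j\<in>{r..d}. ?q j)"
    by (rule sum.mono_neutral_right) auto
  also have "\<dots> = (\<Sum>i\<le>d - r. ?q (i + r))"
    using True by (intro sum.reindex_bij_witness[of _ "\<lambda>i. i + r" "\<lambda>j. j - r"]) auto
  also have "\<dots> = (\<Sum>i\<le>d - r. real (d choose r) * p ^ r * (real (d - r choose i) * p ^ i * (1 - p) ^ (d - r - i)))"
  proof (rule sum.cong[OF refl])
    fix i assume "i \<in> {..d - r}"
    then have "(d choose (i + r)) * (i + r choose r) = (d choose r) * (d - r choose i)"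
      using choose_mult[of r "i + r" d] True by simp
    then show "?q (i + r) = real (d choose r) * p ^ r * (real (d - r choose i) * p ^ i * (1 - p) ^ (d - r - i))"
      using assms \<open>i \<in> {..d - r}\<close> True
      by (simp add: power_add algebra_simps flip: of_nat_mult)
  qed
  also have "\<dots> = real (d choose r) * p ^ r * (\<Sum>i\<le>d - r. real (d - r choose i) * p ^ i * (1 - p) ^ (d - r - i))"
    by (rule sum_distrib_left[symmetric])
  also have "\<dots> = real (d choose r) * p ^ r * (p + (1 - p)) ^ (d - r)"
    by (simp only: binomial_ring)
  finally show ?thesis by simp
qed

lemma prob_binomial_ge_eq:
  fixes p :: real
  assumes "0 \<le> p" "p \<le> 1"
  shows "measure_pmf.prob (binomial_pmf d p) {m..} = (\<Sum>j\<in>{j\<in>{..d}. m \<le> j}. pmf (binomial_pmf d p) j)"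
proof -
  have "set_pmf (binomial_pmf d p) \<subseteq> {..d}"
    using assms by (auto simp: set_pmf_binomial_eq)
  then have "measure_pmf.prob (binomial_pmf d p) {m..} = measure_pmf.prob (binomial_pmf d p) {j\<in>{..d}. m \<le> j}"
    by (intro measure_pmf.finite_measure_eq_AE AE_pmfI) auto
  then show ?thesis by (simp add: measure_measure_pmf_finite)
qed

lemma prob_binomial_ge_le:
  fixes p :: real
  assumes "0 \<le> p" "p \<le> 1" "r \<le> m"
  shows "measure_pmf.prob (binomial_pmf d p) {m..} \<le> (real d * p) ^ r / (fact r * real (m choose r))"
proof -
  have "measure_pmf.prob (binomial_pmf d p) {m..} * real (m choose r)
      \<le> (\<Sum>j\<le>d. pmf (binomial_pmf d p) j * real (j choose r))"
    unfolding prob_binomial_ge_eq[OF assms(1,2)]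
    by (rule markov_binomial_moment[where f = id, simplified]) auto
  also have "\<dots> = real (d choose r) * p ^ r"
    using sum_choose_mult_pmf_binomial[OF assms(1,2)] by (simp add: mult.commute)
  also have "\<dots> \<le> (real d * p) ^ r / fact r"
  proof -
    have "real (d choose r) * fact r \<le> real d ^ r"
      using binomial_fact_pow[of d r] by (metis of_nat_fact of_nat_le_iff of_nat_mult of_nat_power)
    then show ?thesis
      using assms mult_right_mono[of "real (d choose r) * fact r" "real d ^ r" "p ^ r"]
      by (simp add: pos_le_divide_eq power_mult_distrib mult_ac)
  qed
  finally show ?thesis
    using assms by (simp add: field_simps zero_less_binomial)
qed

lemma prob_binomial_ge_eq_0:
  fixes p :: real
  assumes "0 \<le> p" "p \<le> 1" "d < m"
  shows "measure_pmf.prob (binomial_pmf d p) {m..} = 0"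
proof -
  have "{j\<in>{..d}. m \<le> j} = {}" using assms(3) by auto
  then show ?thesis unfolding prob_binomial_ge_eq[OF assms(1,2)] by (simp only: sum.empty)
qed

lemma prob_binomial_atMost_threshold_ge:
  fixes p L \<mu> :: real
  defines "x \<equiv> nat \<lfloor>2 * L\<rfloor>"
  assumes "0 \<le> p" "p \<le> 1" "1 \<le> \<mu>" "48 * ln \<mu> \<le> L" "real d * p \<le> L" "d \<le> D"
  shows "1 - 2 / \<mu> ^ 6 \<le> measure_pmf.prob (binomial_pmf d p) {..min x D}"
proof -
  have "measure_pmf.prob (binomial_pmf d p) {Suc (min x D)..} \<le> 2 / \<mu> ^ 6"
  proof (cases "x \<le> D")
    case True
    have "0 \<le> real d * p" using assms(2) by simp
    moreover have "real d * p \<le> 9/8 * L" using assms(6) calculation by linarith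
    note ratio = binomial_moment_ratio_le_inverse_pow6[OF assms(4,5) calculation this]
    have "measure_pmf.prob (binomial_pmf d p) {Suc x..} \<le> 2 / \<mu> ^ 6"
      unfolding x_def using prob_binomial_ge_le[OF assms(2,3) ratio(1)] ratio(2) by (rule order_trans)
    then show ?thesis using True by (simp add: min_absorb1)
  next
    case False
    then show ?thesis using assms by (simp add: prob_binomial_ge_eq_0)
  qed
  moreover have "{..min x D} = UNIV - {Suc (min x D)..}" by auto
  ultimately show ?thesis
    using measure_pmf.prob_compl[where M = "binomial_pmf d p" and A = "{Suc (min x D)..}"] by simp
qed

lemma sum_degrees_subset_bounds:
  fixes d :: "nat \<Rightarrow> nat"
  assumes "\<And>i. i \<in> {1..n} \<Longrightarrow> 1 \<le> d i" "S \<subseteq> {1..n}"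
  shows "card S \<le> (\<Sum>i\<in>S. d i)" "(\<Sum>i\<in>S. d i) \<le> (\<Sum>i\<in>{1..n}. d i)"
proof -
  have "\<And>i. i \<in> S \<Longrightarrow> 1 \<le> d i" using assms by auto
  then show "card S \<le> (\<Sum>i\<in>S. d i)" using sum_bounded_below[of S 1 d] by simp
  show "(\<Sum>i\<in>S. d i) \<le> (\<Sum>i\<in>{1..n}. d i)" using assms(2) by (intro sum_mono2) auto
qed

lemma elem_k_mem:
  assumes "finite S" "1 \<le> k" "k \<le> card S"
  shows "elem_k S k \<in> S"
  using assms nth_mem[of "k - 1" "sorted_list_of_set S"] by (simp add: elem_k_def)

lemma obtain_initial_segment_elem_k:
  assumes "finite S" "1 \<le> k" "k \<le> card S"
  obtains F where "F \<subseteq> S" "card F = k" "\<And>i. i \<in> F \<Longrightarrow> i \<le> elem_k S k"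
proof
  let ?xs = "sorted_list_of_set S"
  show "set (take k ?xs) \<subseteq> S" "card (set (take k ?xs)) = k"
    using assms by (auto dest: in_set_takeD simp: distinct_card)
  fix i assume "i \<in> set (take k ?xs)"
  then obtain j where "j < k" "i = ?xs ! j"
    using assms by (auto simp: in_set_conv_nth)
  moreover have "?xs ! j \<le> ?xs ! (k - 1)"
    by (rule sorted_nth_mono) (use assms \<open>j < k\<close> in auto)
  ultimately show "i \<le> elem_k S k"
    by (simp add: elem_k_def)
qed

lemma Ncnt_le_Suc: "Ncnt \<gamma> d S j \<le> Ncnt \<gamma> d S (Suc j)"
  unfolding Ncnt_def
  by (intro floor_mono add_right_mono sum_mono measure_pmf.finite_measure_mono) auto

lemma Ncnt_nonneg: "0 \<le> Ncnt \<gamma> d S j"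
  unfolding Ncnt_def by (simp add: sum_nonneg)

lemma sum_nH_lessThan_Suc: "(\<Sum>j<Suc x. nH \<gamma> d S j) = nat (Ncnt \<gamma> d S x)"
proof (induction x)
  case 0
  then show ?case by (simp add: nH_def)
next
  case (Suc x)
  then show ?case
    using Ncnt_le_Suc[of \<gamma> d S x] Ncnt_nonneg[of \<gamma> d S x] by (simp add: nH_def)
qed

lemma dH_le_if_le_Ncnt:
  assumes "x \<le> D" "1 \<le> k" "int k \<le> Ncnt \<gamma> d S x"
  shows "dH \<gamma> d S D k \<le> x"
proof -
  let ?block = "\<lambda>j. replicate (nH \<gamma> d S j) j"
  let ?prefix = "concat (map ?block [0..<Suc x])"
  have "[0..<D + 1] = [0..<Suc x] @ [Suc x..<D + 1]"
    using assms(1) upt_add_eq_append[of 0 "Suc x" "D - x"] by simp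
  then have split: "dH_list \<gamma> d S D = ?prefix @ concat (map ?block [Suc x..<D + 1])"
    unfolding dH_list_def by simp
  have "length ?prefix = (\<Sum>j<Suc x. nH \<gamma> d S j)"
    by (simp add: length_concat comp_def sum_list_sum_nth atLeast0LessThan)
  then have "k - 1 < length ?prefix"
    using assms(2,3) sum_nH_lessThan_Suc[of \<gamma> d S x] by linarith
  then have "dH \<gamma> d S D k = ?prefix ! (k - 1)"
    unfolding dH_def split by (rule nth_append_left)
  also have "\<dots> \<in> set ?prefix"
    by (rule nth_mem) fact
  finally show ?thesis by auto
qed

lemma int_le_Ncnt:
  fixes \<epsilon> :: real
  assumes "finite S" "F \<subseteq> S" "card F = k" "real k * \<epsilon> \<le> 1/2"
    and "\<And>i. i \<in> F \<Longrightarrow> 1 - \<epsilon> \<le> measure_pmf.prob (binomial_pmf (d i) \<gamma>) {..x}"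
  shows "int k \<le> Ncnt \<gamma> d S x"
proof -
  have "real k - 1/2 \<le> (\<Sum>i\<in>F. 1 - \<epsilon>)"
    using assms(3,4) by (simp add: algebra_simps)
  also have "\<dots> \<le> (\<Sum>i\<in>F. measure_pmf.prob (binomial_pmf (d i) \<gamma>) {..x})"
    by (rule sum_mono) (rule assms(5))
  also have "\<dots> \<le> (\<Sum>i\<in>S. measure_pmf.prob (binomial_pmf (d i) \<gamma>) {..x})"
    using assms(1,2) by (intro sum_mono2) auto
  finally show ?thesis
    unfolding Ncnt_def by (simp add: le_floor_iff)
qed

lemma dH_le_threshold:
  fixes n k :: nat and d :: "nat \<Rightarrow> nat" and S :: "nat set" and \<theta> T :: real
  defines "M \<equiv> real (\<Sum>i\<in>{1..n}. d i)" and "\<gamma> \<equiv> real (\<Sum>i\<in>S. d i) / real (\<Sum>i\<in>{1..n}. d i)"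
  assumes pos: "\<And>i. i \<in> {1..n} \<Longrightarrow> 1 \<le> d i"
    and mono: "\<And>i j. 1 \<le> i \<Longrightarrow> i \<le> j \<Longrightarrow> j \<le> n \<Longrightarrow> d i \<le> d j"
    and S: "S \<subseteq> {1..n}" and M: "3 \<le> M" and \<theta>: "48 \<le> \<theta>"
    and T: "T = \<theta> * ln M * M / real (\<Sum>i\<in>S. d i)"
    and k: "k \<in> {1..card S}" "real (d (elem_k S k)) \<le> T"
  shows "real (dH \<gamma> d S (d n) k) \<le> 2 * \<gamma> * T"
proof -
  define L where "L = \<theta> * ln M"
  define x where "x = nat \<lfloor>2 * L\<rfloor>"
  have "finite S" using S finite_subset by blast
  have "1 \<le> k" "k \<le> card S" using k by auto
  from sum_degrees_subset_bounds[where d = d, OF pos S]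
  have "real (card S) \<le> M" "real (\<Sum>i\<in>S. d i) \<le> M" "0 < real (\<Sum>i\<in>S. d i)"
    using \<open>1 \<le> k\<close> \<open>k \<le> card S\<close> unfolding M_def by (simp_all del: of_nat_sum)
  then have "0 \<le> \<gamma>" "\<gamma> \<le> 1" "\<gamma> * T = L"
    using M unfolding \<gamma>_def M_def T L_def by (simp_all add: field_simps del: of_nat_sum)
  have "48 * ln M \<le> L"
    using \<theta> M unfolding L_def by (intro mult_right_mono) auto
  obtain F where F: "F \<subseteq> S" "card F = k" "\<And>i. i \<in> F \<Longrightarrow> i \<le> elem_k S k"
    using obtain_initial_segment_elem_k[OF \<open>finite S\<close> \<open>1 \<le> k\<close> \<open>k \<le> card S\<close>] by blast
  \<comment> \<open>\<open>d\<^sub>H\<close> lists only the values up to \<open>\<Delta> = d n\<close>, so the threshold \<open>x\<close> is capped at \<open>\<Delta>\<close>.\<close>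
  have "int k \<le> Ncnt \<gamma> d S (min x (d n))"
  proof (rule int_le_Ncnt[OF \<open>finite S\<close> F(1,2)])
    have "real k * (2 / M ^ 6) \<le> 2 / M ^ 5"
      using \<open>k \<le> card S\<close> \<open>real (card S) \<le> M\<close> by (intro mult_two_inverse_pow6_le) auto
    also have "\<dots> \<le> 1/2"
      using M power_mono[of 3 M 5] by (simp add: field_simps)
    finally show "real k * (2 / M ^ 6) \<le> 1/2" .
  next
    fix i assume "i \<in> F"
    then have "i \<in> {1..n}" "elem_k S k \<in> {1..n}"
      using F S elem_k_mem[OF \<open>finite S\<close> \<open>1 \<le> k\<close> \<open>k \<le> card S\<close>] by auto
    then have "d i \<le> d (elem_k S k)" "d i \<le> d n"
      using F(3)[OF \<open>i \<in> F\<close>] by (auto intro: mono)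
    then have "real (d i) * \<gamma> \<le> L"
      using k(2) \<open>0 \<le> \<gamma>\<close> \<open>\<gamma> * T = L\<close> by (metis mult.commute mult_right_mono of_nat_le_iff order_trans)
    then show "1 - 2 / M ^ 6 \<le> measure_pmf.prob (binomial_pmf (d i) \<gamma>) {..min x (d n)}"
      unfolding x_def using M \<open>48 * ln M \<le> L\<close> \<open>0 \<le> \<gamma>\<close> \<open>\<gamma> \<le> 1\<close> \<open>d i \<le> d n\<close>
      by (intro prob_binomial_atMost_threshold_ge) auto
  qed
  then have "dH \<gamma> d S (d n) k \<le> min x (d n)"
    using \<open>1 \<le> k\<close> by (intro dH_le_if_le_Ncnt) auto
  then show ?thesis
    unfolding x_def using \<open>\<gamma> * T = L\<close> \<open>48 * ln M \<le> L\<close> M ln_ge_zero[of M] by linarith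
qed

section \<open>Switchings in graphs with a given degree sequence\<close>

definition neighbours :: "nat set set \<Rightarrow> nat \<Rightarrow> nat set" where
  "neighbours E x = {y. {x, y} \<in> E}"

lemma simple_graphs_onD:
  assumes "E \<in> simple_graphs_on n" "e \<in> E"
  shows "e \<subseteq> {1..n}" "card e = 2"
  using assms by (auto simp: simple_graphs_on_def)

lemma finite_simple_graphs_on: "finite (simple_graphs_on n)"
  unfolding simple_graphs_on_def by (rule finite_subset[of _ "Pow (Pow {1..n})"]) auto

lemma finite_simple_graph: "E \<in> simple_graphs_on n \<Longrightarrow> finite E"
  unfolding simple_graphs_on_def by (rule finite_subset[of _ "Pow {1..n}"]) auto

lemma finite_graphs_with_degrees: "finite (graphs_with_degrees n d)"
  using finite_simple_graphs_on by (simp add: graphs_with_degrees_def)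

lemma graphs_with_degreesD:
  assumes "E \<in> graphs_with_degrees n d"
  shows "E \<in> simple_graphs_on n" "\<And>i. i \<in> {1..n} \<Longrightarrow> gdeg E i = d i"
  using assms by (auto simp: graphs_with_degrees_def)

lemma neighbours_subset:
  assumes "E \<in> simple_graphs_on n"
  shows "neighbours E x \<subseteq> {1..n}"
  using simple_graphs_onD(1)[OF assms] by (auto simp: neighbours_def)

lemma finite_neighbours:
  assumes "E \<in> simple_graphs_on n"
  shows "finite (neighbours E x)"
  using neighbours_subset[OF assms] by (rule finite_subset) simp

lemma card_edges_at:
  assumes "E \<in> simple_graphs_on n"
  shows "card {e\<in>E. x \<in> e \<and> P e} = card {y\<in>neighbours E x. P {x, y}}"
proof -
  have "bij_betw (\<lambda>y. {x, y}) {y\<in>neighbours E x. P {x, y}} {e\<in>E. x \<in> e \<and> P e}"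
  proof (rule bij_betwI')
    fix y z
    show "({x, y} = {x, z}) = (y = z)" by (auto simp: doubleton_eq_iff)
  next
    fix y assume "y \<in> {y\<in>neighbours E x. P {x, y}}"
    then show "{x, y} \<in> {e\<in>E. x \<in> e \<and> P e}" by (simp add: neighbours_def)
  next
    fix e assume e: "e \<in> {e\<in>E. x \<in> e \<and> P e}"
    then have "card (e - {x}) = 1"
      using simple_graphs_onD(2)[OF assms] by simp
    then obtain y where "e - {x} = {y}" by (rule card_1_singletonE)
    then have "e = {x, y}" using e by blast
    then show "\<exists>y\<in>{y\<in>neighbours E x. P {x, y}}. e = {x, y}"
      using e by (auto simp: neighbours_def)
  qed
  then show ?thesis by (simp add: bij_betw_same_card)
qed

lemma card_neighbours: "E \<in> simple_graphs_on n \<Longrightarrow> card (neighbours E x) = gdeg E x"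
  using card_edges_at[where P = "\<lambda>_. True"] by (simp add: gdeg_def)

lemma card_neighbours_eq:
  "E \<in> graphs_with_degrees n d \<Longrightarrow> x \<in> {1..n} \<Longrightarrow> card (neighbours E x) = d x"
  using graphs_with_degreesD card_neighbours by metis

lemma card_neighbours_le:
  assumes "E \<in> graphs_with_degrees n d" "\<And>i. i \<in> {1..n} \<Longrightarrow> d i \<le> \<Delta>"
  shows "card (neighbours E x) \<le> \<Delta>"
proof (cases "x \<in> {1..n}")
  case True
  then show ?thesis
    using assms graphs_with_degreesD[OF assms(1)] card_neighbours by simp
next
  case False
  then have "neighbours E x = {}"
    using simple_graphs_onD(1)[OF graphs_with_degreesD(1)[OF assms(1)]] unfolding neighbours_def by blast
  then show ?thesis by simp
qed

lemma induced_deg_eq_card_neighbours: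
  assumes "E \<in> simple_graphs_on n" "v \<in> S"
  shows "induced_deg E S v = card (neighbours E v \<inter> S)"
proof -
  have "{y\<in>neighbours E v. {v, y} \<subseteq> S} = neighbours E v \<inter> S"
    using assms by auto
  then show ?thesis
    using card_edges_at[OF assms(1), where P = "\<lambda>e. e \<subseteq> S"] by (simp add: induced_deg_def)
qed

lemma card_Sigma_neighbours_le:
  assumes "E \<in> graphs_with_degrees n d" "\<And>i. i \<in> {1..n} \<Longrightarrow> d i \<le> \<Delta>" "finite X"
  shows "card (Sigma X (neighbours E)) \<le> card X * \<Delta>"
proof -
  have "card (Sigma X (neighbours E)) = (\<Sum>x\<in>X. card (neighbours E x))"
    using assms(3) finite_neighbours[OF graphs_with_degreesD(1)[OF assms(1)]] by (simp add: card_SigmaI)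
  also have "\<dots> \<le> card X * \<Delta>"
    using sum_bounded_above[of X "\<lambda>x. card (neighbours E x)" \<Delta>] card_neighbours_le[OF assms(1,2)] by simp
  finally show ?thesis .
qed

definition switch :: "nat \<Rightarrow> nat \<Rightarrow> nat \<Rightarrow> nat \<Rightarrow> nat set set \<Rightarrow> nat set set" where
  "switch v a x y E = E - {{v, a}, {x, y}} \<union> {{v, x}, {a, y}}"

definition switchable :: "nat \<Rightarrow> nat \<Rightarrow> nat set set \<Rightarrow> (nat \<times> nat) set" where
  "switchable v a E =
     {(x, y). {x, y} \<in> E \<and> x \<notin> {v, a} \<and> y \<notin> {v, a} \<and> {v, x} \<notin> E \<and> {a, y} \<notin> E}"

lemma switchable_subset_arcs:
  assumes "E \<in> simple_graphs_on n"
  shows "switchable v a E \<subseteq> Sigma {1..n} (neighbours E)"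
proof
  fix p assume "p \<in> switchable v a E"
  then obtain x y where "p = (x, y)" "{x, y} \<in> E" by (auto simp: switchable_def)
  then show "p \<in> Sigma {1..n} (neighbours E)"
    using simple_graphs_onD(1)[OF assms \<open>{x, y} \<in> E\<close>] by (auto simp: neighbours_def)
qed

lemma finite_switchable:
  assumes "E \<in> simple_graphs_on n"
  shows "finite (switchable v a E)"
  by (rule finite_subset[OF switchable_subset_arcs[OF assms]]) (use finite_neighbours[OF assms] in auto)

lemma card_arcs_not_switchable_le:
  assumes E: "E \<in> graphs_with_degrees n d" and \<Delta>: "\<And>i. i \<in> {1..n} \<Longrightarrow> d i \<le> \<Delta>"
  shows "card (Sigma {1..n} (neighbours E) - switchable v a E) \<le> 6 * \<Delta> ^ 2"
proof -
  let ?N = "neighbours E"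
  let ?bad = "Sigma {v, a} ?N \<union> prod.swap ` Sigma {v, a} ?N \<union> Sigma (?N v) ?N \<union> prod.swap ` Sigma (?N a) ?N"
  have simple: "E \<in> simple_graphs_on n"
    using graphs_with_degreesD(1)[OF E] .
  have "p \<in> ?bad" if p: "p \<in> Sigma {1..n} ?N - switchable v a E" for p
  proof -
    obtain x y where [simp]: "p = (x, y)" by (cases p)
    have "{x, y} \<in> E" "{y, x} \<in> E" using p by (auto simp: neighbours_def insert_commute)
    moreover have "x \<in> {v, a} \<or> y \<in> {v, a} \<or> {v, x} \<in> E \<or> {a, y} \<in> E"
      using p \<open>{x, y} \<in> E\<close> by (auto simp: switchable_def)
    ultimately show ?thesis by (auto simp: neighbours_def)
  qed
  then have "card (Sigma {1..n} ?N - switchable v a E) \<le> card ?bad"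
    using finite_neighbours[OF simple] by (intro card_mono) auto
  also have "\<dots> \<le> card (Sigma {v, a} ?N) + card (prod.swap ` Sigma {v, a} ?N)
      + card (Sigma (?N v) ?N) + card (prod.swap ` Sigma (?N a) ?N)"
    by (rule order_trans[OF card_Un_le], rule add_right_mono,
        rule order_trans[OF card_Un_le], rule add_right_mono, rule card_Un_le)
  also have "\<dots> = card (Sigma {v, a} ?N) + card (Sigma {v, a} ?N) + card (Sigma (?N v) ?N) + card (Sigma (?N a) ?N)"
    by (simp add: card_image[OF inj_swap])
  also have "\<dots> \<le> 2 * \<Delta> + 2 * \<Delta> + \<Delta> * \<Delta> + \<Delta> * \<Delta>"
  proof -
    have "card {v, a} \<le> 2" by (simp add: card_insert_if)
    then have "card (Sigma {v, a} ?N) \<le> 2 * \<Delta>"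
      using card_Sigma_neighbours_le[OF E \<Delta>, of "{v, a}"] by (meson finite.emptyI finite.insertI mult_le_mono1 order_trans)
    moreover have "card (Sigma (?N u) ?N) \<le> \<Delta> * \<Delta>" for u
      using card_Sigma_neighbours_le[OF E \<Delta> finite_neighbours[OF simple]] card_neighbours_le[OF E \<Delta>, of u]
      by (meson mult_le_mono1 order_trans)
    ultimately show ?thesis by (intro add_mono)
  qed
  also have "\<dots> \<le> 6 * \<Delta> ^ 2"
    by (simp add: power2_eq_square)
  finally show ?thesis .
qed

lemma card_switchable_ge:
  assumes E: "E \<in> graphs_with_degrees n d" and \<Delta>: "\<And>i. i \<in> {1..n} \<Longrightarrow> d i \<le> \<Delta>"
  shows "real (\<Sum>i\<in>{1..n}. d i) - 6 * real \<Delta> ^ 2 \<le> real (card (switchable v a E))"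
proof -
  let ?arcs = "Sigma {1..n} (neighbours E)"
  have simple: "E \<in> simple_graphs_on n"
    using graphs_with_degreesD(1)[OF E] .
  have "finite ?arcs" "switchable v a E \<subseteq> ?arcs"
    using finite_neighbours[OF simple] switchable_subset_arcs[OF simple] by auto
  then have "card ?arcs = card (switchable v a E) + card (?arcs - switchable v a E)"
    by (metis card_Diff_subset card_mono finite_subset le_add_diff_inverse)
  moreover have "card ?arcs = (\<Sum>i\<in>{1..n}. d i)"
    using graphs_with_degreesD[OF E] finite_neighbours[OF simple]
    by (simp add: card_SigmaI card_neighbours[OF simple])
  ultimately have "(\<Sum>i\<in>{1..n}. d i) \<le> card (switchable v a E) + 6 * \<Delta> ^ 2"
    using card_arcs_not_switchable_le[OF E \<Delta>, of v a] by linarith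
  then have "real (\<Sum>i\<in>{1..n}. d i) \<le> real (card (switchable v a E) + 6 * \<Delta> ^ 2)"
    by (simp only: of_nat_le_iff)
  then show ?thesis by simp
qed

lemma gdeg_switch:
  assumes "finite E" "distinct [v, a, x, y]"
    and "{v, a} \<in> E" "{x, y} \<in> E" "{v, x} \<notin> E" "{a, y} \<notin> E"
  shows "gdeg (switch v a x y E) i = gdeg E i"
proof -
  let ?R = "{{v, a}, {x, y}}" and ?A = "{{v, x}, {a, y}}"
  let ?deg = "\<lambda>F. \<Sum>e\<in>F. if i \<in> e then 1 else 0 :: nat"
  have gdeg_sum: "gdeg F i = ?deg F" if "finite F" for F
    using that by (simp add: gdeg_def flip: sum.inter_filter)
  have distinct_edges: "{v, a} \<noteq> {x, y}" "{v, x} \<noteq> {a, y}"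
    using assms(2) by (auto simp: doubleton_eq_iff)
  have "?deg (E - ?R \<union> ?A) = ?deg (E - ?R) + ?deg ?A"
    using assms by (intro sum.union_disjoint) auto
  moreover have "?deg E = ?deg (E - ?R) + ?deg ?R"
    using assms by (intro sum.subset_diff) auto
  moreover have "?deg ?R = ?deg ?A"
    using assms(2) distinct_edges by auto
  ultimately show ?thesis
    using assms(1) by (simp add: gdeg_sum switch_def)
qed

lemma switch_mem_graphs_with_degrees:
  assumes E: "E \<in> graphs_with_degrees n d" and "{v, a} \<in> E" "(x, y) \<in> switchable v a E"
  shows "switch v a x y E \<in> graphs_with_degrees n d"
proof -
  have simple: "E \<in> simple_graphs_on n" using graphs_with_degreesD(1)[OF E] .
  have xy: "{x, y} \<in> E" "x \<notin> {v, a}" "y \<notin> {v, a}" "{v, x} \<notin> E" "{a, y} \<notin> E"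
    using assms(3) by (auto simp: switchable_def)
  have "card {v, a} = 2" "card {x, y} = 2"
    using simple_graphs_onD(2)[OF simple] \<open>{v, a} \<in> E\<close> xy(1) by auto
  then have "distinct [v, a, x, y]"
    using xy(2,3) by (auto simp: card_insert_if split: if_splits)
  have "{v, a} \<subseteq> {1..n}" "{x, y} \<subseteq> {1..n}"
    by (intro simple_graphs_onD(1)[OF simple] \<open>{v, a} \<in> E\<close> xy(1))+
  then have "switch v a x y E \<in> simple_graphs_on n"
    using simple \<open>distinct [v, a, x, y]\<close> by (auto simp: switch_def simple_graphs_on_def)
  moreover have "gdeg (switch v a x y E) i = gdeg E i" for i
    by (rule gdeg_switch[OF finite_simple_graph[OF simple] \<open>distinct [v, a, x, y]\<close>
          \<open>{v, a} \<in> E\<close> xy(1,4,5)])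
  ultimately show ?thesis
    using E by (simp add: graphs_with_degrees_def)
qed

lemma switch_inj:
  assumes "{v, a} \<in> E\<^sub>1" "(x, y) \<in> switchable v a E\<^sub>1" "{v, a} \<in> E\<^sub>2" "(x, y) \<in> switchable v a E\<^sub>2"
    and "switch v a x y E\<^sub>1 = switch v a x y E\<^sub>2"
  shows "E\<^sub>1 = E\<^sub>2"
proof -
  have "E = switch v a x y E - {{v, x}, {a, y}} \<union> {{v, a}, {x, y}}"
    if "{v, a} \<in> E" "(x, y) \<in> switchable v a E" for E
    using that unfolding switch_def switchable_def by blast
  then show ?thesis using assms by metis
qed

section \<open>Stars and induced degrees\<close>

definition graphs_with_star :: "nat \<Rightarrow> (nat \<Rightarrow> nat) \<Rightarrow> nat \<Rightarrow> nat set \<Rightarrow> nat set set set" where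
  "graphs_with_star n d v A = {E \<in> graphs_with_degrees n d. A \<subseteq> neighbours E v}"

lemma finite_graphs_with_star: "finite (graphs_with_star n d v A)"
  using finite_graphs_with_degrees by (rule finite_subset[rotated]) (auto simp: graphs_with_star_def)

lemma graphs_with_starD:
  assumes "E \<in> graphs_with_star n d v A"
  shows "E \<in> graphs_with_degrees n d" "E \<in> simple_graphs_on n" "\<And>a. a \<in> A \<Longrightarrow> {v, a} \<in> E"
  using assms graphs_with_degreesD(1) by (auto simp: graphs_with_star_def neighbours_def)

lemma switch_mem_graphs_with_star:
  assumes E: "E \<in> graphs_with_star n d v (insert a A)" and xy: "(x, y) \<in> switchable v a E"
    and "a \<notin> A"
  shows "switch v a x y E \<in> graphs_with_star n d v A"
proof -
  have "switch v a x y E \<in> graphs_with_degrees n d"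
    using graphs_with_starD[OF E] xy by (intro switch_mem_graphs_with_degrees) auto
  moreover have "{v, b} \<in> switch v a x y E" if "b \<in> A" for b
  proof -
    have "{v, b} \<in> E" using graphs_with_starD(3)[OF E] that by simp
    moreover have "{v, b} \<noteq> {v, a}" using that \<open>a \<notin> A\<close> by (auto simp: doubleton_eq_iff)
    moreover have "{v, b} \<noteq> {x, y}" using xy by (auto simp: switchable_def doubleton_eq_iff)
    ultimately show ?thesis by (simp add: switch_def)
  qed
  then have "A \<subseteq> neighbours (switch v a x y E) v" by (auto simp: neighbours_def)
  ultimately show ?thesis by (simp add: graphs_with_star_def)
qed

text \<open>Double counting of switchings: a graph containing the star from \<open>v\<close> to \<open>insert a A\<close> admits
  at least \<open>M - 6\<Delta>\<^sup>2\<close> switchings \<open>va, xy \<mapsto> vx, ay\<close>.  They lead injectively to a graph containing the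
  star to \<open>A\<close> together with a pair \<open>x \<in> N(v)\<close>, \<open>y \<in> N(a)\<close>, and each graph has \<open>d(v) d(a)\<close> such pairs.\<close>

lemma card_graphs_with_star_insert_le:
  assumes \<Delta>: "\<And>i. i \<in> {1..n} \<Longrightarrow> d i \<le> \<Delta>" and "v \<in> {1..n}" "a \<in> {1..n}" "a \<notin> A"
  shows "real (card (graphs_with_star n d v (insert a A))) * (real (\<Sum>i\<in>{1..n}. d i) - 6 * real \<Delta> ^ 2)
       \<le> real (card (graphs_with_star n d v A)) * real (d v) * real (d a)"
proof -
  let ?Y' = "graphs_with_star n d v (insert a A)" and ?Y = "graphs_with_star n d v A"
  let ?P = "Sigma ?Y' (switchable v a)"
  let ?Q = "Sigma ?Y (\<lambda>E. neighbours E v \<times> neighbours E a)"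
  define f where "f = (\<lambda>(E, x :: nat, y :: nat). (switch v a x y E, x, y))"
  have "real (card ?Y') * (real (\<Sum>i\<in>{1..n}. d i) - 6 * real \<Delta> ^ 2)
      \<le> (\<Sum>E\<in>?Y'. real (card (switchable v a E)))"
    using card_switchable_ge[OF graphs_with_starD(1) \<Delta>] by (intro sum_bounded_below) auto
  also have "\<dots> = real (card ?P)"
    using finite_graphs_with_star finite_switchable[OF graphs_with_starD(2)] by (simp add: card_SigmaI)
  also have "card ?P \<le> card ?Q"
  proof (rule card_inj_on_le)
    show "inj_on f ?P"
    proof (rule inj_onI)
      fix p q assume "p \<in> ?P" "q \<in> ?P" "f p = f q"
      moreover obtain E\<^sub>1 x y where p: "p = (E\<^sub>1, x, y)" by (cases p)
      moreover obtain E\<^sub>2 x' y' where q: "q = (E\<^sub>2, x', y')" by (cases q)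
      ultimately have "x' = x" "y' = y" "switch v a x y E\<^sub>1 = switch v a x y E\<^sub>2"
        "(x, y) \<in> switchable v a E\<^sub>1" "(x, y) \<in> switchable v a E\<^sub>2"
        "{v, a} \<in> E\<^sub>1" "{v, a} \<in> E\<^sub>2"
        using graphs_with_starD(3) by (auto simp: f_def)
      then show "p = q" using p q switch_inj by metis
    qed
    show "f ` ?P \<subseteq> ?Q"
      using switch_mem_graphs_with_star \<open>a \<notin> A\<close> by (auto simp: f_def switch_def neighbours_def)
    show "finite ?Q"
      using finite_graphs_with_star finite_neighbours[OF graphs_with_starD(2)] by auto
  qed
  also have "card ?Q = card ?Y * (d v * d a)"
    using finite_graphs_with_star finite_neighbours[OF graphs_with_starD(2)]
      card_neighbours_eq[OF graphs_with_starD(1)] assms(2,3)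
    by (simp add: card_SigmaI card_cartesian_product)
  finally show ?thesis by (simp add: mult.assoc)
qed

lemma card_graphs_with_star_le:
  fixes n \<Delta> :: nat and d :: "nat \<Rightarrow> nat" and K :: real
  defines "K \<equiv> real (\<Sum>i\<in>{1..n}. d i) - 6 * real \<Delta> ^ 2"
  assumes "finite A" "A \<subseteq> {1..n}" "\<And>i. i \<in> {1..n} \<Longrightarrow> d i \<le> \<Delta>" "v \<in> {1..n}" "0 < K"
  shows "real (card (graphs_with_star n d v A))
       \<le> real (card (graphs_with_degrees n d)) * (\<Prod>a\<in>A. real (d v) * real (d a) / K)"
  using assms(2,3)
proof (induction A rule: finite_induct)
  case empty
  then show ?case by (simp add: graphs_with_star_def)
next
  case (insert a A)
  have "real (card (graphs_with_star n d v (insert a A))) * K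
      \<le> real (card (graphs_with_star n d v A)) * real (d v) * real (d a)"
    unfolding K_def using insert assms by (intro card_graphs_with_star_insert_le) auto
  then have "real (card (graphs_with_star n d v (insert a A)))
      \<le> real (card (graphs_with_star n d v A)) * (real (d v) * real (d a) / K)"
    using \<open>0 < K\<close> by (simp add: field_simps)
  also have "\<dots> \<le> real (card (graphs_with_degrees n d)) * (\<Prod>a\<in>A. real (d v) * real (d a) / K)
      * (real (d v) * real (d a) / K)"
    using insert \<open>0 < K\<close> by (intro mult_right_mono) auto
  finally show ?case
    using insert.hyps by (simp add: mult_ac)
qed

lemma sum_card_graphs_with_star:
  assumes "finite T"
  shows "(\<Sum>A | A \<subseteq> T \<and> card A = r. card (graphs_with_star n d v A))
       = (\<Sum>E\<in>graphs_with_degrees n d. card (neighbours E v \<inter> T) choose r)"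
proof -
  let ?G = "graphs_with_degrees n d" and ?F = "{A. A \<subseteq> T \<and> card A = r}"
  have "finite ?F" using assms by simp
  have card_filter: "card {x\<in>X. P x} = (\<Sum>x\<in>X. if P x then 1 else 0)" if "finite X" for X :: "'b set" and P
    using that by (simp flip: sum.inter_filter)
  have "(\<Sum>A\<in>?F. card (graphs_with_star n d v A)) = (\<Sum>A\<in>?F. \<Sum>E\<in>?G. if A \<subseteq> neighbours E v then 1 else 0)"
    unfolding graphs_with_star_def by (simp only: card_filter[OF finite_graphs_with_degrees])
  also have "\<dots> = (\<Sum>E\<in>?G. \<Sum>A\<in>?F. if A \<subseteq> neighbours E v then 1 else 0)"
    by (rule sum.swap)
  also have "\<dots> = (\<Sum>E\<in>?G. card {A\<in>?F. A \<subseteq> neighbours E v})"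
    by (simp only: card_filter[OF \<open>finite ?F\<close>])
  also have "\<dots> = (\<Sum>E\<in>?G. card (neighbours E v \<inter> T) choose r)"
  proof (rule sum.cong[OF refl])
    fix E
    have "{A\<in>?F. A \<subseteq> neighbours E v} = {A. A \<subseteq> neighbours E v \<inter> T \<and> card A = r}" by auto
    moreover have "card {A. A \<subseteq> neighbours E v \<inter> T \<and> card A = r} = card (neighbours E v \<inter> T) choose r"
      using assms by (intro n_subsets) simp
    ultimately show "card {A\<in>?F. A \<subseteq> neighbours E v} = card (neighbours E v \<inter> T) choose r"
      by metis
  qed
  finally show ?thesis .
qed

text \<open>Markov's inequality for the \<open>r\<close>-th binomial moment of \<open>|N(v) \<inter> T|\<close>, which by double counting is
  the sum, over the \<open>r\<close>-subsets \<open>A\<close> of \<open>T\<close>, of the proportion of graphs containing the star to \<open>A\<close>.\<close>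

lemma card_graphs_many_neighbours_le:
  fixes n \<Delta> :: nat and d :: "nat \<Rightarrow> nat" and K :: real
  defines "K \<equiv> real (\<Sum>i\<in>{1..n}. d i) - 6 * real \<Delta> ^ 2"
  assumes "T \<subseteq> {1..n}" "\<And>i. i \<in> {1..n} \<Longrightarrow> d i \<le> \<Delta>" "v \<in> {1..n}" "0 < K" "r \<le> m"
  shows "real (card {E \<in> graphs_with_degrees n d. m \<le> card (neighbours E v \<inter> T)})
       \<le> real (card (graphs_with_degrees n d))
           * ((real (d v) * real (\<Sum>a\<in>T. d a) / K) ^ r / (fact r * real (m choose r)))"
proof -
  let ?G = "graphs_with_degrees n d"
  have "finite T" using assms(2) finite_subset by blast
  have "real (card {E \<in> ?G. m \<le> card (neighbours E v \<inter> T)}) * real (m choose r)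
      \<le> (\<Sum>E\<in>?G. 1 * real (card (neighbours E v \<inter> T) choose r))"
    using markov_binomial_moment[OF finite_graphs_with_degrees,
        where w = "\<lambda>_. 1" and f = "\<lambda>E. card (neighbours E v \<inter> T)"] by simp
  also have "\<dots> = (\<Sum>A | A \<subseteq> T \<and> card A = r. real (card (graphs_with_star n d v A)))"
    using sum_card_graphs_with_star[OF \<open>finite T\<close>] by (simp flip: of_nat_sum)
  also have "\<dots> \<le> (\<Sum>A | A \<subseteq> T \<and> card A = r. real (card ?G) * (\<Prod>a\<in>A. real (d v) * real (d a) / K))"
    using assms \<open>finite T\<close> unfolding K_def
    by (intro sum_mono card_graphs_with_star_le) (auto dest: finite_subset)
  also have "\<dots> \<le> real (card ?G) * ((\<Sum>a\<in>T. real (d v) * real (d a) / K) ^ r / fact r)"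
    unfolding sum_distrib_left[symmetric] using \<open>finite T\<close> \<open>0 < K\<close>
    by (intro mult_left_mono sum_prod_subsets_card_le) auto
  also have "(\<Sum>a\<in>T. real (d v) * real (d a) / K) = real (d v) * real (\<Sum>a\<in>T. d a) / K"
    by (simp add: sum_distrib_left sum_divide_distrib)
  finally have "real (card {E \<in> ?G. m \<le> card (neighbours E v \<inter> T)}) * real (m choose r)
      \<le> real (card ?G) * ((real (d v) * real (\<Sum>a\<in>T. d a) / K) ^ r / fact r)" .
  then have "real (card {E \<in> ?G. m \<le> card (neighbours E v \<inter> T)})
      \<le> real (card ?G) * ((real (d v) * real (\<Sum>a\<in>T. d a) / K) ^ r / fact r) / real (m choose r)"
    using \<open>r \<le> m\<close> by (subst pos_le_divide_eq) (auto simp: zero_less_binomial)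
  then show ?thesis
    by (simp only: times_divide_eq_right divide_divide_eq_left)
qed

lemma prob_many_neighbours_le:
  fixes n \<Delta> :: nat and d :: "nat \<Rightarrow> nat" and L :: real
  defines "M \<equiv> real (\<Sum>i\<in>{1..n}. d i)" and "x \<equiv> nat \<lfloor>2 * L\<rfloor>"
  assumes G: "graphs_with_degrees n d \<noteq> {}"
    and graph: "T \<subseteq> {1..n}" "\<And>i. i \<in> {1..n} \<Longrightarrow> d i \<le> \<Delta>" "v \<in> {1..n}"
    and \<Delta>: "54 * real \<Delta> ^ 2 \<le> M" and M: "1 \<le> M" "48 * ln M \<le> L"
    and v: "real (d v) * real (\<Sum>a\<in>T. d a) \<le> L * M"
  shows "measure_pmf.prob (pmf_of_set (graphs_with_degrees n d)) {E. Suc x \<le> card (neighbours E v \<inter> T)}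
       \<le> 2 / M ^ 6"
proof -
  let ?G = "graphs_with_degrees n d"
  let ?K = "M - 6 * real \<Delta> ^ 2"
  let ?\<Lambda> = "real (d v) * real (\<Sum>a\<in>T. d a) / ?K"
  have "8/9 * M \<le> ?K" "0 < ?K" "0 \<le> L"
    using \<Delta> M ln_ge_zero[of M] by linarith+
  have "0 \<le> ?\<Lambda>" using \<open>0 < ?K\<close> by (simp add: sum_nonneg)
  have "?\<Lambda> \<le> L * M / (8/9 * M)"
    using v M \<open>8/9 * M \<le> ?K\<close> \<open>0 \<le> L\<close> by (intro frac_le) auto
  also have "\<dots> = 9/8 * L" using M by simp
  finally have "?\<Lambda> \<le> 9/8 * L" .
  note ratio = binomial_moment_ratio_le_inverse_pow6[OF M \<open>0 \<le> ?\<Lambda>\<close> this]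
  have "?G \<inter> {E. Suc x \<le> card (neighbours E v \<inter> T)} = {E \<in> ?G. Suc x \<le> card (neighbours E v \<inter> T)}"
    by auto
  then have "real (card (?G \<inter> {E. Suc x \<le> card (neighbours E v \<inter> T)}))
      \<le> real (card ?G) * (?\<Lambda> ^ nat \<lfloor>L / 2\<rfloor> / (fact (nat \<lfloor>L / 2\<rfloor>) * real (Suc x choose nat \<lfloor>L / 2\<rfloor>)))"
    using card_graphs_many_neighbours_le[where d = d and n = n and \<Delta> = \<Delta>,
          OF graph _ ratio(1), folded M_def x_def] \<open>0 < ?K\<close> by simp
  also have "\<dots> \<le> real (card ?G) * (2 / M ^ 6)"
    by (rule mult_left_mono[OF ratio(2)[folded x_def]]) simp
  finally show ?thesis
    using G finite_graphs_with_degrees by (simp add: measure_pmf_of_set card_gt_0_iff field_simps)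
qed

lemma measure_pmf_union_bound:
  assumes "finite K" "A \<inter> set_pmf p \<subseteq> (\<Union>k\<in>K. B k)" "\<And>k. k \<in> K \<Longrightarrow> measure_pmf.prob p (B k) \<le> \<epsilon>"
  shows "measure_pmf.prob p A \<le> real (card K) * \<epsilon>"
proof -
  have "measure_pmf.prob p A = measure_pmf.prob p (A \<inter> set_pmf p)"
    by (simp add: measure_Int_set_pmf)
  also have "\<dots> \<le> measure_pmf.prob p (\<Union>k\<in>K. B k)"
    using assms(2) by (rule measure_pmf.finite_measure_mono) simp
  also have "\<dots> \<le> (\<Sum>k\<in>K. measure_pmf.prob p (B k))"
    using assms(1) by (rule measure_pmf.finite_measure_subadditive_finite) simp
  also have "\<dots> \<le> (\<Sum>k\<in>K. \<epsilon>)"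
    using assms(3) by (rule sum_mono)
  finally show ?thesis by simp
qed

lemma many_neighbours_if_induced_deg_gt:
  assumes "E \<in> graphs_with_degrees n d" "v \<in> S" "real x \<le> c" "\<not> real (induced_deg E S v) \<le> c"
  shows "Suc x \<le> card (neighbours E v \<inter> S)"
  using assms induced_deg_eq_card_neighbours[OF graphs_with_degreesD(1)[OF assms(1)] assms(2)] by simp

lemma prob_induced_deg_gt_threshold_le:
  fixes n :: nat and d :: "nat \<Rightarrow> nat" and S :: "nat set" and \<theta> T :: real
  defines "M \<equiv> real (\<Sum>i\<in>{1..n}. d i)" and "\<gamma> \<equiv> real (\<Sum>i\<in>S. d i) / real (\<Sum>i\<in>{1..n}. d i)"
  assumes pos: "\<And>i. i \<in> {1..n} \<Longrightarrow> 1 \<le> d i"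
    and mono: "\<And>i j. 1 \<le> i \<Longrightarrow> i \<le> j \<Longrightarrow> j \<le> n \<Longrightarrow> d i \<le> d j"
    and S: "S \<subseteq> {1..n}" "S \<noteq> {}" and M: "3 \<le> M" and \<theta>: "48 \<le> \<theta>"
    and \<Delta>: "54 * real (d n) ^ 2 \<le> M"
    and T: "T = \<theta> * ln M * M / real (\<Sum>i\<in>S. d i)"
    and G: "graphs_with_degrees n d \<noteq> {}"
  shows "measure_pmf.prob (pmf_of_set (graphs_with_degrees n d))
           {E. \<exists>k\<in>{1..card S}. real (d (elem_k S k)) \<le> T \<and>
               \<not> real (induced_deg E S (elem_k S k)) \<le> 2 * \<gamma> * T}
         \<le> 2 / M ^ 5"
    (is "measure_pmf.prob ?p ?event \<le> _")
proof -
  define L where "L = \<theta> * ln M"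
  define x where "x = nat \<lfloor>2 * L\<rfloor>"
  let ?K = "{k\<in>{1..card S}. real (d (elem_k S k)) \<le> T}"
  have "finite S" using S finite_subset by blast
  then have "0 < card S" using S(2) by (simp add: card_gt_0_iff)
  from sum_degrees_subset_bounds[where d = d, OF pos S(1)]
  have "real (card S) \<le> M" "0 < real (\<Sum>i\<in>S. d i)"
    using \<open>0 < card S\<close> unfolding M_def by (simp_all del: of_nat_sum)
  then have "2 * \<gamma> * T = 2 * L" "T * real (\<Sum>i\<in>S. d i) = L * M"
    using M unfolding T L_def \<gamma>_def M_def by (simp_all add: field_simps)
  have "48 * ln M \<le> L"
    using \<theta> M unfolding L_def by (intro mult_right_mono) auto
  then have "real x \<le> 2 * L"
    unfolding x_def using M ln_ge_zero[of M] by linarith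
  have "measure_pmf.prob ?p ?event \<le> real (card ?K) * (2 / M ^ 6)"
  proof (rule measure_pmf_union_bound)
    show "?event \<inter> set_pmf ?p \<subseteq> (\<Union>k\<in>?K. {E. Suc x \<le> card (neighbours E (elem_k S k) \<inter> S)})"
    proof
      fix E assume E: "E \<in> ?event \<inter> set_pmf ?p"
      then obtain k where k: "k \<in> ?K" and deg: "\<not> real (induced_deg E S (elem_k S k)) \<le> 2 * L"
        using \<open>2 * \<gamma> * T = 2 * L\<close> by auto
      have "E \<in> graphs_with_degrees n d"
        using E G finite_graphs_with_degrees by simp
      moreover have "elem_k S k \<in> S"
        using k \<open>finite S\<close> by (auto intro: elem_k_mem)
      ultimately have "Suc x \<le> card (neighbours E (elem_k S k) \<inter> S)"
        using \<open>real x \<le> 2 * L\<close> deg by (rule many_neighbours_if_induced_deg_gt)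
      then show "E \<in> (\<Union>k\<in>?K. {E. Suc x \<le> card (neighbours E (elem_k S k) \<inter> S)})"
        using k by blast
    qed
  next
    fix k assume k: "k \<in> ?K"
    then have "elem_k S k \<in> S" using \<open>finite S\<close> by (auto intro: elem_k_mem)
    have "real (d (elem_k S k)) * real (\<Sum>i\<in>S. d i) \<le> T * real (\<Sum>i\<in>S. d i)"
      using k by (intro mult_right_mono) (auto simp: sum_nonneg)
    then have "real (d (elem_k S k)) * real (\<Sum>i\<in>S. d i) \<le> L * M"
      using \<open>T * real (\<Sum>i\<in>S. d i) = L * M\<close> by simp
    then show "measure_pmf.prob ?p {E. Suc x \<le> card (neighbours E (elem_k S k) \<inter> S)} \<le> 2 / M ^ 6"
      using G S(1) \<open>elem_k S k \<in> S\<close> \<Delta> M \<open>48 * ln M \<le> L\<close>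
      by (intro prob_many_neighbours_le[where \<Delta> = "d n" and d = d and n = n and L = L,
            folded M_def x_def]) (auto intro: mono)
  qed simp
  also have "\<dots> \<le> real (card S) * (2 / M ^ 6)"
  proof (rule mult_right_mono)
    have "card ?K \<le> card {1..card S}" by (intro card_mono) auto
    then show "real (card ?K) \<le> real (card S)" by simp
  qed simp
  also have "\<dots> \<le> 2 / M ^ 5"
    using \<open>real (card S) \<le> M\<close> by (intro mult_two_inverse_pow6_le) auto
  finally show ?thesis .
qed

lemma smallo_inverse_square_if_le_inverse_pow5:
  fixes f g :: "nat \<Rightarrow> real"
  assumes "filterlim g at_top at_top" "\<forall>\<^sub>F n in at_top. \<bar>f n\<bar> \<le> K / g n ^ 5"
  shows "f \<in> o(\<lambda>n. 1 / g n ^ 2)"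
proof -
  have "\<forall>\<^sub>F n in at_top. 0 < g n"
    using assms(1) by (simp add: filterlim_at_top_dense)
  with assms(2) have "\<forall>\<^sub>F n in at_top. norm (f n) \<le> K * norm (1 / g n ^ 5)"
    by eventually_elim simp
  then have "f \<in> O(\<lambda>n. 1 / g n ^ 5)"
    by (rule bigoI)
  moreover have "(\<lambda>n. 1 / g n ^ 5) \<in> o(\<lambda>n. 1 / g n ^ 2)"
    by (rule landau_o.small.compose[OF _ assms(1)]) real_asymp
  ultimately show ?thesis
    by (rule landau_o.big_small_trans)
qed

lemma powr_minus_one_over_32_ge_48:
  fixes \<delta> :: real
  assumes "0 < \<delta>" "\<delta> < (1/48) ^ 32"
  shows "48 \<le> \<delta> powr (-1/32)"
proof -
  have "\<delta> powr (1/32) < ((1/48) powr 32) powr (1/32)"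
    using assms by (intro powr_less_mono2) (auto simp: powr_numeral)
  also have "\<dots> = 1/48"
    by (simp only: powr_powr) simp
  finally show ?thesis
    using assms by (simp add: powr_minus field_simps)
qed

lemma max_degree_square_le:
  fixes n :: nat and d :: "nat \<Rightarrow> nat" and S :: "nat set" and \<delta> :: real
  defines "M \<equiv> real (\<Sum>i\<in>{1..n}. d i)" and "\<gamma> \<equiv> real (\<Sum>i\<in>S. d i) / real (\<Sum>i\<in>{1..n}. d i)"
  assumes pos: "\<And>i. i \<in> {1..n} \<Longrightarrow> 1 \<le> d i"
    and S: "S \<subseteq> {1..n}" "S \<noteq> {}" and M: "3 \<le> M" and \<delta>: "0 \<le> \<delta>" "\<delta> \<le> 1/54"
    and ineq: "real (d n) ^ 2 * ((1 / \<gamma>) * ln M) ^ 12 \<le> \<delta> * real (\<Sum>i\<in>S. d i)"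
  shows "54 * real (d n) ^ 2 \<le> M"
proof -
  have "0 < card S" using S finite_subset by (auto simp: card_gt_0_iff)
  then have "0 < real (\<Sum>i\<in>S. d i)" "real (\<Sum>i\<in>S. d i) \<le> M"
    using sum_degrees_subset_bounds[where d = d, OF pos S(1)] unfolding M_def by (simp_all del: of_nat_sum)
  have "1 \<le> ln M"
    using M exp_le by (subst ln_ge_iff) auto
  moreover have "1 \<le> 1 / \<gamma>"
    using \<open>0 < real (\<Sum>i\<in>S. d i)\<close> \<open>real (\<Sum>i\<in>S. d i) \<le> M\<close> unfolding \<gamma>_def M_def by (simp del: of_nat_sum)
  ultimately have "1 * 1 \<le> (1 / \<gamma>) * ln M"
    by (intro mult_mono) linarith+
  then have "real (d n) ^ 2 * 1 \<le> real (d n) ^ 2 * ((1 / \<gamma>) * ln M) ^ 12"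
    by (intro mult_left_mono one_le_power) auto
  also have "\<dots> \<le> \<delta> * M"
    using ineq \<open>real (\<Sum>i\<in>S. d i) \<le> M\<close> \<delta>(1) by (smt (verit) mult_left_mono)
  also have "\<dots> \<le> M / 54"
    using \<delta> M by simp
  finally show ?thesis by simp
qed

lemma filterlim_sum_degrees_at_top:
  fixes d :: "nat \<Rightarrow> nat \<Rightarrow> nat"
  assumes "\<And>n i. i \<in> {1..n} \<Longrightarrow> 1 \<le> d n i"
  shows "filterlim (\<lambda>n. real (\<Sum>i\<in>{1..n}. d n i)) at_top at_top"
proof (rule filterlim_at_top_mono[OF filterlim_real_sequentially always_eventually], intro allI)
  fix n
  have "card {1..n} \<le> (\<Sum>i\<in>{1..n}. d n i)"
    by (rule sum_degrees_subset_bounds(1)[where n = n]) (use assms in auto)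
  then show "real n \<le> real (\<Sum>i\<in>{1..n}. d n i)" by (simp del: of_nat_sum)
qed

lemma degree_bounds_fixed_n:
  fixes n :: nat and d :: "nat \<Rightarrow> nat" and S :: "nat set" and \<delta> :: real
  defines "M \<equiv> real (\<Sum>i\<in>{1..n}. d i)"
    and "\<gamma> \<equiv> real (\<Sum>i\<in>S. d i) / real (\<Sum>i\<in>{1..n}. d i)"
    and "C \<equiv> \<delta> powr (-1/16) * (real (\<Sum>i\<in>{1..n}. d i) / real (\<Sum>i\<in>S. d i)) * ln (real (\<Sum>i\<in>{1..n}. d i))"
  assumes pos: "\<And>i. i \<in> {1..n} \<Longrightarrow> 1 \<le> d i"
    and mono: "\<And>i j. 1 \<le> i \<Longrightarrow> i \<le> j \<Longrightarrow> j \<le> n \<Longrightarrow> d i \<le> d j"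
    and S: "S \<subseteq> {1..n}" and \<delta>: "0 < \<delta>" "\<delta> < (1/48) ^ 32" and "3 \<le> n"
    and ineq: "real (d n) ^ 2 * ((1 / \<gamma>) * ln M) ^ 12 \<le> \<delta> * real (\<Sum>i\<in>S. d i)"
  shows "\<forall>k\<in>{1..card S}. real (d (elem_k S k)) \<le> \<delta> powr (1/32) * C \<longrightarrow>
           real (dH \<gamma> d S (d n) k) \<le> 2 * \<gamma> * \<delta> powr (1/32) * C"
    and "graphs_with_degrees n d \<noteq> {} \<Longrightarrow>
         measure_pmf.prob (pmf_of_set (graphs_with_degrees n d))
           {E. \<exists>k\<in>{1..card S}. real (d (elem_k S k)) \<le> \<delta> powr (1/32) * C \<and>
               \<not> (real (induced_deg E S (elem_k S k)) \<le> 2 * \<gamma> * \<delta> powr (1/32) * C)}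
         \<le> 2 / M ^ 5"
proof -
  define \<theta> where "\<theta> = \<delta> powr (-1/32)"
  have "48 \<le> \<theta>"
    unfolding \<theta>_def using \<delta> by (rule powr_minus_one_over_32_ge_48)
  have T: "\<delta> powr (1/32) * C = \<theta> * ln M * M / real (\<Sum>i\<in>S. d i)"
    unfolding C_def \<theta>_def M_def by (simp add: powr_add[symmetric] mult_ac)
  have "card {1..n} \<le> (\<Sum>i\<in>{1..n}. d i)"
    by (rule sum_degrees_subset_bounds(1)[where n = n]) (use pos in auto)
  then have "3 \<le> M"
    using \<open>3 \<le> n\<close> unfolding M_def by (simp del: of_nat_sum)
  show "\<forall>k\<in>{1..card S}. real (d (elem_k S k)) \<le> \<delta> powr (1/32) * C \<longrightarrow>
           real (dH \<gamma> d S (d n) k) \<le> 2 * \<gamma> * \<delta> powr (1/32) * C"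
    using dH_le_threshold[OF pos mono S _ \<open>48 \<le> \<theta>\<close> T[unfolded M_def]] \<open>3 \<le> M\<close>
    unfolding M_def \<gamma>_def by (simp add: mult.assoc)
  show "measure_pmf.prob (pmf_of_set (graphs_with_degrees n d))
           {E. \<exists>k\<in>{1..card S}. real (d (elem_k S k)) \<le> \<delta> powr (1/32) * C \<and>
               \<not> (real (induced_deg E S (elem_k S k)) \<le> 2 * \<gamma> * \<delta> powr (1/32) * C)}
         \<le> 2 / M ^ 5" if "graphs_with_degrees n d \<noteq> {}"
  proof (cases "S = {}")
    case True
    then show ?thesis using \<open>3 \<le> M\<close> by simp
  next
    case False
    have "(1/48 :: real) ^ 32 \<le> 1/54" by (simp add: power_one_over)
    then have "\<delta> \<le> 1/54" using \<delta>(2) by linarith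
    then have "54 * real (d n) ^ 2 \<le> M"
      using pos S False \<open>3 \<le> M\<close> \<delta>(1) ineq unfolding M_def \<gamma>_def
      by (intro max_degree_square_le) auto
    from prob_induced_deg_gt_threshold_le[OF pos mono S False \<open>3 \<le> M\<close>[unfolded M_def] \<open>48 \<le> \<theta>\<close>
        this[unfolded M_def] T[unfolded M_def] that]
    show ?thesis unfolding M_def \<gamma>_def by (simp add: mult.assoc)
  qed
qed

theorem lemma3p7:
  fixes d :: "nat \<Rightarrow> nat \<Rightarrow> nat"
    and S :: "nat \<Rightarrow> nat set"
    and \<delta> :: "nat \<Rightarrow> real"
    and c :: real
  defines "M \<equiv> (\<lambda>n. real (\<Sum>i\<in>{1..n}. d n i))"
    and "\<Delta> \<equiv> (\<lambda>n. d n n)"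
    and "\<gamma> \<equiv> (\<lambda>n. real (\<Sum>i\<in>S n. d n i) / real (\<Sum>i\<in>{1..n}. d n i))"
    and "C \<equiv> (\<lambda>n. \<delta> n powr (-1/16)
            * (real (\<Sum>i\<in>{1..n}. d n i) / real (\<Sum>i\<in>S n. d n i))
            * ln (real (\<Sum>i\<in>{1..n}. d n i)))"
  assumes pos: "\<And>n i. i \<in> {1..n} \<Longrightarrow> 1 \<le> d n i"
    and mono: "\<And>n i j. 1 \<le> i \<Longrightarrow> i \<le> j \<Longrightarrow> j \<le> n \<Longrightarrow> d n i \<le> d n j"
    and even: "\<And>n. even (\<Sum>i\<in>{1..n}. d n i)"
    and Ssub: "\<And>n. S n \<subseteq> {1..n}"
    and graphical: "\<forall>\<^sub>F n in at_top. graphs_with_degrees n (d n) \<noteq> {}"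
    and delta_pos: "\<forall>\<^sub>F n in at_top. \<delta> n > 0"
    and delta_lim: "\<delta> \<longlonglongrightarrow> 0"
    and delta_inv: "(\<lambda>n. 1 / \<delta> n) \<in> O(\<lambda>n. ln (ln (M n)))"
    and main_ineq: "\<forall>\<^sub>F n in at_top.
        real (\<Delta> n) ^ 2 * ((1 / \<gamma> n) * ln (M n)) ^ 12 \<le> \<delta> n * real (\<Sum>i\<in>S n. d n i)"
    and c_pos: "c > 0"
    and gamma_bound: "\<forall>\<^sub>F n in at_top. \<gamma> n < 1 - c"
  shows "(\<forall>\<^sub>F n in at_top. \<forall>k\<in>{1..card (S n)}.
            real (d n (elem_k (S n) k)) \<le> \<delta> n powr (1/32) * C n \<longrightarrow>
            real (dH (\<gamma> n) (d n) (S n) (\<Delta> n) k) \<le> 2 * \<gamma> n * \<delta> n powr (1/32) * C n)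
       \<and> (\<lambda>n. measure_pmf.prob (pmf_of_set (graphs_with_degrees n (d n)))
               {E. \<exists>k\<in>{1..card (S n)}.
                    real (d n (elem_k (S n) k)) \<le> \<delta> n powr (1/32) * C n \<and>
                    \<not> (real (induced_deg E (S n) (elem_k (S n) k))
                         \<le> 2 * \<gamma> n * \<delta> n powr (1/32) * C n)})
         \<in> o(\<lambda>n. 1 / M n ^ 2)"
proof -
  have "\<forall>\<^sub>F n in at_top. \<delta> n < (1/48) ^ 32"
    by (rule order_tendstoD(2)[OF delta_lim]) simp
  with delta_pos eventually_ge_at_top[of 3]
  have "\<forall>\<^sub>F n in at_top. 0 < \<delta> n \<and> \<delta> n < (1/48) ^ 32 \<and> 3 \<le> n"
    by eventually_elim auto
  note eventually_fixed_n = this main_ineq[unfolded M_def \<Delta>_def \<gamma>_def]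
  have lim: "filterlim (\<lambda>n. real (\<Sum>i\<in>{1..n}. d n i)) at_top at_top"
    using pos by (rule filterlim_sum_degrees_at_top)
  show ?thesis
    unfolding M_def \<gamma>_def C_def \<Delta>_def
    apply (intro conjI smallo_inverse_square_if_le_inverse_pow5[where K = 2, OF lim])
    subgoal
      using eventually_fixed_n proof eventually_elim
      case (elim n)
      show ?case
        by (rule degree_bounds_fixed_n(1)[where n = n and d = "d n" and S = "S n" and \<delta> = "\<delta> n"])
          (use pos mono Ssub elim in auto)
    qed
    subgoal
      using eventually_fixed_n graphical proof eventually_elim
      case (elim n)
      show ?case
        using degree_bounds_fixed_n(2)[where n = n and d = "d n" and S = "S n" and \<delta> = "\<delta> n"]
          pos mono Ssub elim by simp
    qed
    done
qed

end
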